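(* Let $p\in[1,\infty]$, let $Y$ be a complex Banach space, let $(\mathcal G,+)$ be a countable discrete group and $\mathbf X=\ell^p(\mathcal G,Y)$, with $\mathcal P$ and $\mathcal L(\mathbf X,\mathcal P)$ as in the context. Let $(\Omega,\mathcal G,\alpha)$ be a dynamical system and $A:\Omega\to\mathcal L(\mathbf X,\mathcal P)$ a family of operators over it. Then for all $\omega\in\Omega$, $$\sigma^{\mathrm{op}}(A(\omega))=\{A(\nu):\nu\in L(\omega)\}.$$
   Context: $(\mathcal G,+)$ is written additively but need not be abelian. Choose subsets $\mathcal G_n\subseteq\mathcal G$ with $\emptyset\neq\mathcal G_n\neq\mathcal G$, such that for each $m$ there is $N_m$ with $\mathcal G_m\subseteq\mathcal G_n$ for $n\ge N_m$, and $\bigcup_n\mathcal G_n=\mathcal G$; $P_n$ is multiplication by $\mathbf 1_{\mathcal G_n}$, $\mathcal P=(P_n)$. $K\in\mathcal L(\mathbf X)$ is $\mathcal P$-compact if $\|K(I-P_n)\|\to0$ and $\|(I-P_n)K\|\to0$; $\mathcal K(\mathbf X,\mathcal P)$ is the set of these and $\mathcal L(\mathbf X,\mathcal P)=\{A\in\mathcal L(\mathbf X):AK,KA\in\mathcal K(\mathbf X,\mathcal P)\ \forall K\in\mathcal K(\mathbf X,\mathcal P)\}$. $(A_n)$ converges $\mathcal P$-strongly to $A$ ($\mathcal P\text{-}\lim A_n=A$) if $\|K(A_n-A)\|+\|(A_n-A)K\|\to0$ for all $K\in\mathcal K(\mathbf X,\mathcal P)$. $V_gx=(x_{h+g})_{h\in\mathcal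 G}$. $g_n\to\infty$ means $(g_n)$ eventually leaves every finite subset of $\mathcal G$. For $B\in\mathcal L(\mathbf X,\mathcal P)$ and $g=(g_n)$ with $g_n\to\infty$, the limit operator is $B_g:=\mathcal P\text{-}\lim V_{g_n}BV_{-g_n}$ if it exists; $\sigma^{\mathrm{op}}(B)$ (operator spectrum) is the set of all limit operators of $B$. A dynamical system $(\Omega,\mathcal G,\alpha)$: $\Omega$ compact metric space, $\alpha$ maps $\mathcal G$ to homeomorphisms of $\Omega$ with $\alpha(g+h)=\alpha(g)\circ\alpha(h)$. $L(\omega)=\{\nu\in\Omega:\exists g_n\to\infty,\ \alpha(g_n)(\omega)\to\nu\}$. A family of operators over $(\Omega,\mathcal G,\alpha)$ is $A:\Omega\to\mathcal L(\mathbf X,\mathcal P)$ with $A(\alpha(g)(\omega))=V_gA(\omega)V_{-g}$ for all $\omega,g$, and such that $\omega_n\to\omega$ implies $\mathcal P\text{-}\lim A(\omega_n)=A(\omega)$. *)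

theory Defs
  imports "HOL-Analysis.Analysis" "HOL-Library.Countable"
begin

text \<open>A complex Banach space Y is modelled as a real Banach space 'y together with a
 complex structure J (multiplication by i), compatible with the norm.\<close>

definition cscale :: "('y::real_vector \<Rightarrow> 'y) \<Rightarrow> complex \<Rightarrow> 'y \<Rightarrow> 'y" where
  "cscale J c y = Re c *\<^sub>R y + Im c *\<^sub>R J y"

definition complex_structure :: "('y::real_normed_vector \<Rightarrow> 'y) \<Rightarrow> bool" where
  "complex_structure J \<longleftrightarrow> bounded_linear J \<and> (\<forall>y. J (J y) = - y)
     \<and> (\<forall>c y. norm (cscale J c y) = cmod c * norm y)"

definition lp_mem :: "ennreal \<Rightarrow> ('g \<Rightarrow> 'y::real_normed_vector) \<Rightarrow> bool" where
  "lp_mem p x \<longleftrightarrow> (if p = (top::ennreal) then bounded (range (\<lambda>g. norm (x g)))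
                     else (\<lambda>g. norm (x g) powr enn2real p) summable_on UNIV)"

definition lpX :: "ennreal \<Rightarrow> ('g \<Rightarrow> 'y::real_normed_vector) set" where
  "lpX p = {x. lp_mem p x}"

definition lp_norm :: "ennreal \<Rightarrow> ('g \<Rightarrow> 'y::real_normed_vector) \<Rightarrow> real" where
  "lp_norm p x = (if p = (top::ennreal) then (SUP g. norm (x g))
                  else (\<Sum>\<^sub>\<infinity>g. norm (x g) powr enn2real p) powr (1 / enn2real p))"

text \<open>An operator is represented as a
 function on all of 'g => 'y which vanishes outside l^p (extensional convention), so that
 equality of operators is equality of functions.\<close>

definition is_op :: "ennreal \<Rightarrow> ('y::real_normed_vector \<Rightarrow> 'y) \<Rightarrow>
    (('g \<Rightarrow> 'y) \<Rightarrow> ('g \<Rightarrow> 'y)) \<Rightarrow> bool" where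
  "is_op p J A \<longleftrightarrow>
     (\<forall>x\<in>lpX p. A x \<in> lpX p)
   \<and> (\<forall>x\<in>lpX p. \<forall>y\<in>lpX p. A (\<lambda>g. x g + y g) = (\<lambda>g. A x g + A y g))
   \<and> (\<forall>c. \<forall>x\<in>lpX p. A (\<lambda>g. cscale J c (x g)) = (\<lambda>g. cscale J c (A x g)))
   \<and> (\<exists>C. \<forall>x\<in>lpX p. lp_norm p (A x) \<le> C * lp_norm p x)
   \<and> (\<forall>x. x \<notin> lpX p \<longrightarrow> A x = (\<lambda>_. 0))"

definition opnorm :: "ennreal \<Rightarrow> (('g \<Rightarrow> 'y::real_normed_vector) \<Rightarrow> ('g \<Rightarrow> 'y)) \<Rightarrow> real" where
  "opnorm p A = Sup {lp_norm p (A x) | x. x \<in> lpX p \<and> lp_norm p x \<le> 1}"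

definition opdiff :: "(('g \<Rightarrow> 'y::ab_group_add) \<Rightarrow> ('g \<Rightarrow> 'y)) \<Rightarrow> (('g \<Rightarrow> 'y) \<Rightarrow> ('g \<Rightarrow> 'y))
    \<Rightarrow> ('g \<Rightarrow> 'y) \<Rightarrow> ('g \<Rightarrow> 'y)" where
  "opdiff A B = (\<lambda>x g. A x g - B x g)"

text \<open>I - P_n, where P_n is multiplication by the indicator of Gs n.\<close>
definition IminusP :: "ennreal \<Rightarrow> (nat \<Rightarrow> 'g set) \<Rightarrow> nat \<Rightarrow> ('g \<Rightarrow> 'y::real_normed_vector) \<Rightarrow> ('g \<Rightarrow> 'y)" where
  "IminusP p Gs n = (\<lambda>x. if x \<in> lpX p then (\<lambda>g. if g \<in> Gs n then 0 else x g) else (\<lambda>_. 0))"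

definition Vop :: "ennreal \<Rightarrow> 'g::group_add \<Rightarrow> ('g \<Rightarrow> 'y::real_normed_vector) \<Rightarrow> ('g \<Rightarrow> 'y)" where
  "Vop p g = (\<lambda>x. if x \<in> lpX p then (\<lambda>h. x (h + g)) else (\<lambda>_. 0))"

definition admissible_Gs :: "(nat \<Rightarrow> 'g set) \<Rightarrow> bool" where
  "admissible_Gs Gs \<longleftrightarrow> (\<forall>n. Gs n \<noteq> {} \<and> Gs n \<noteq> UNIV)
     \<and> (\<forall>m. \<exists>N. \<forall>n\<ge>N. Gs m \<subseteq> Gs n) \<and> (\<Union>n. Gs n) = UNIV"

definition Pcompact :: "ennreal \<Rightarrow> ('y::real_normed_vector \<Rightarrow> 'y) \<Rightarrow> (nat \<Rightarrow> 'g set) \<Rightarrow>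
    (('g \<Rightarrow> 'y) \<Rightarrow> ('g \<Rightarrow> 'y)) \<Rightarrow> bool" where
  "Pcompact p J Gs K \<longleftrightarrow> is_op p J K
     \<and> (\<lambda>n. opnorm p (K \<circ> IminusP p Gs n)) \<longlonglongrightarrow> 0
     \<and> (\<lambda>n. opnorm p (IminusP p Gs n \<circ> K)) \<longlonglongrightarrow> 0"

definition LXP :: "ennreal \<Rightarrow> ('y::real_normed_vector \<Rightarrow> 'y) \<Rightarrow> (nat \<Rightarrow> 'g set) \<Rightarrow>
    (('g \<Rightarrow> 'y) \<Rightarrow> ('g \<Rightarrow> 'y)) set" where
  "LXP p J Gs = {A. is_op p J A \<and>
     (\<forall>K. Pcompact p J Gs K \<longrightarrow> Pcompact p J Gs (A \<circ> K) \<and> Pcompact p J Gs (K \<circ> A))}"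

definition Plim :: "ennreal \<Rightarrow> ('y::real_normed_vector \<Rightarrow> 'y) \<Rightarrow> (nat \<Rightarrow> 'g set) \<Rightarrow>
    (nat \<Rightarrow> ('g \<Rightarrow> 'y) \<Rightarrow> ('g \<Rightarrow> 'y)) \<Rightarrow> (('g \<Rightarrow> 'y) \<Rightarrow> ('g \<Rightarrow> 'y)) \<Rightarrow> bool" where
  "Plim p J Gs An A \<longleftrightarrow> A \<in> LXP p J Gs \<and>
     (\<forall>K. Pcompact p J Gs K \<longrightarrow>
        (\<lambda>n. opnorm p (K \<circ> opdiff (An n) A) + opnorm p (opdiff (An n) A \<circ> K)) \<longlonglongrightarrow> 0)"

definition tends_to_inf :: "(nat \<Rightarrow> 'g) \<Rightarrow> bool" where
  "tends_to_inf g \<longleftrightarrow> (\<forall>F. finite F \<longrightarrow> eventually (\<lambda>n. g n \<notin> F) sequentially)"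

definition op_spectrum :: "ennreal \<Rightarrow> ('y::real_normed_vector \<Rightarrow> 'y) \<Rightarrow> (nat \<Rightarrow> 'g::group_add set) \<Rightarrow>
    (('g \<Rightarrow> 'y) \<Rightarrow> ('g \<Rightarrow> 'y)) \<Rightarrow> (('g \<Rightarrow> 'y) \<Rightarrow> ('g \<Rightarrow> 'y)) set" where
  "op_spectrum p J Gs B = {C. \<exists>g. tends_to_inf g \<and>
      Plim p J Gs (\<lambda>n. Vop p (g n) \<circ> B \<circ> Vop p (- g n)) C}"

definition dyn_system :: "('g::group_add \<Rightarrow> 'w::metric_space \<Rightarrow> 'w) \<Rightarrow> bool" where
  "dyn_system \<alpha> \<longleftrightarrow> compact (UNIV :: 'w set)
     \<and> (\<forall>g. \<exists>h. homeomorphism UNIV UNIV (\<alpha> g) h)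
     \<and> (\<forall>g h. \<alpha> (g + h) = \<alpha> g \<circ> \<alpha> h)"

definition limit_set :: "('g \<Rightarrow> 'w::topological_space \<Rightarrow> 'w) \<Rightarrow> 'w \<Rightarrow> 'w set" where
  "limit_set \<alpha> \<omega> = {\<nu>. \<exists>g. tends_to_inf g \<and> (\<lambda>n. \<alpha> (g n) \<omega>) \<longlonglongrightarrow> \<nu>}"

definition op_family :: "ennreal \<Rightarrow> ('y::real_normed_vector \<Rightarrow> 'y) \<Rightarrow> (nat \<Rightarrow> 'g::group_add set) \<Rightarrow>
    ('g \<Rightarrow> 'w::metric_space \<Rightarrow> 'w) \<Rightarrow> ('w \<Rightarrow> ('g \<Rightarrow> 'y) \<Rightarrow> ('g \<Rightarrow> 'y)) \<Rightarrow> bool" where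
  "op_family p J Gs \<alpha> A \<longleftrightarrow> (\<forall>\<omega>. A \<omega> \<in> LXP p J Gs)
     \<and> (\<forall>\<omega> g. A (\<alpha> g \<omega>) = Vop p g \<circ> A \<omega> \<circ> Vop p (- g))
     \<and> (\<forall>\<omega>s \<omega>. \<omega>s \<longlonglongrightarrow> \<omega> \<longrightarrow> Plim p J Gs (\<lambda>n. A (\<omega>s n)) (A \<omega>))"

end

theory Submission
  imports Defs
begin

text \<open>Since \<open>A (\<alpha> g \<omega>) = V\<^sub>g A \<omega> V\<^sub>-\<^sub>g\<close>, the limit operator of \<open>A \<omega>\<close> along \<open>g\<^sub>n\<close> is the
 \<open>\<P>\<close>-limit of \<open>A (\<alpha> g\<^sub>n \<omega>)\<close>. Continuity of \<open>A\<close> turns every limit point \<open>\<nu>\<close> of the orbit into the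
 limit operator \<open>A \<nu>\<close>. Conversely, compactness of \<open>\<Omega>\<close> yields a subsequence along which
 \<open>\<alpha> g\<^sub>n \<omega> \<rightarrow> \<nu>\<close>, and the limit operator equals \<open>A \<nu>\<close> because \<open>\<P>\<close>-limits are unique: the rank-one
 projections onto single coordinates are \<open>\<P>\<close>-compact and already separate operators.\<close>

lemma enn2real_ge_1: "p \<ge> (1::ennreal) \<Longrightarrow> p \<noteq> top \<Longrightarrow> enn2real p \<ge> 1"
  using enn2real_mono[of 1 p] by (simp add: top.not_eq_extremum)

lemma powr_add_le: fixes a b q :: real assumes "0 \<le> a" "0 \<le> b" "0 \<le> q"
  shows "(a + b) powr q \<le> 2 powr q * (a powr q + b powr q)"
proof -
  have "(a + b) powr q \<le> (2 * max a b) powr q"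
    using assms by (intro powr_mono2) auto
  also have "\<dots> = 2 powr q * max a b powr q"
    using assms by (simp add: powr_mult)
  also have "max a b powr q \<le> a powr q + b powr q"
    using assms by (cases "a \<le> b") (auto simp: max_def)
  finally show ?thesis by simp
qed

lemma root_add_le: fixes a b q :: real assumes "0 \<le> a" "0 \<le> b" "1 \<le> q"
  shows "(a + b) powr (1/q) \<le> 2 * (a powr (1/q) + b powr (1/q))"
proof -
  have "(a + b) powr (1/q) \<le> 2 powr (1/q) * (a powr (1/q) + b powr (1/q))"
    using assms by (intro powr_add_le) auto
  also have "\<dots> \<le> 2 * (a powr (1/q) + b powr (1/q))"
    using assms powr_mono[of "1/q" 1 2] by (intro mult_right_mono) auto
  finally show ?thesis .
qed

subsection \<open>The spaces \<open>\<ell>\<^sup>p\<close>\<close>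

lemma zero_in_lpX: "(\<lambda>_. 0) \<in> lpX p"
  and lp_norm_zero: "lp_norm p (\<lambda>_::'g. 0::'y::real_normed_vector) = 0"
  by (auto simp: lpX_def lp_mem_def lp_norm_def)

lemma bdd_above_norm_lp_top: "x \<in> lpX top \<Longrightarrow> bdd_above (range (\<lambda>g. norm (x g)))"
  by (simp add: lpX_def lp_mem_def bounded_imp_bdd_above)

lemma lp_norm_nonneg: assumes "x \<in> lpX p" shows "0 \<le> lp_norm p x"
proof (cases "p = top")
  case True
  then have "norm (x undefined) \<le> (SUP g. norm (x g))"
    using assms by (intro cSUP_upper bdd_above_norm_lp_top) auto
  then show ?thesis using True by (simp add: lp_norm_def) (meson norm_ge_zero order_trans)
qed (simp add: lp_norm_def)

lemma norm_le_lp_norm: assumes "p \<ge> 1" "x \<in> lpX p" shows "norm (x g) \<le> lp_norm p x"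
proof (cases "p = top")
  case True
  then have "norm (x g) \<le> (SUP g. norm (x g))"
    using assms by (intro cSUP_upper bdd_above_norm_lp_top) auto
  then show ?thesis using True by (simp add: lp_norm_def)
next
  case False
  define q where "q = enn2real p"
  have q: "q \<ge> 1" using enn2real_ge_1[OF assms(1) False] by (simp add: q_def)
  have "(\<lambda>g. norm (x g) powr q) summable_on UNIV"
    using assms False by (simp add: lpX_def lp_mem_def q_def)
  then have "infsum (\<lambda>g. norm (x g) powr q) {g} \<le> infsum (\<lambda>g. norm (x g) powr q) UNIV"
    by (intro infsum_mono_neutral) auto
  then have "(norm (x g) powr q) powr (1/q) \<le> infsum (\<lambda>g. norm (x g) powr q) UNIV powr (1/q)"
    using q by (intro powr_mono2) auto
  moreover have "(norm (x g) powr q) powr (1/q) = norm (x g)"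
    using q by (simp add: powr_powr)
  ultimately show ?thesis using False by (simp add: lp_norm_def q_def)
qed

text \<open>A quasi-triangle inequality with constant 4, which suffices here and avoids Minkowski's
 inequality.\<close>

lemma lp_dominated_top:
  assumes x: "x \<in> lpX top" and y: "y \<in> lpX top" and k: "k \<ge> 0"
    and dom: "\<And>g. norm (z g) \<le> k * (norm (x g) + norm (y g))"
  shows "z \<in> lpX top \<and> lp_norm top z \<le> k * (lp_norm top x + lp_norm top y)"
proof -
  have "norm (z g) \<le> k * (lp_norm top x + lp_norm top y)" for g
  proof -
    have "norm (x g) + norm (y g) \<le> lp_norm top x + lp_norm top y"
      using norm_le_lp_norm[OF _ x] norm_le_lp_norm[OF _ y] by (intro add_mono) auto
    then show ?thesis using dom[of g] k by (meson mult_left_mono order_trans)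
  qed
  then have "bounded (range (\<lambda>g. norm (z g)))" and "(SUP g. norm (z g)) \<le> k * (lp_norm top x + lp_norm top y)"
    by (auto simp: bounded_iff intro: cSUP_least)
  then show ?thesis by (simp add: lpX_def lp_mem_def lp_norm_def)
qed

lemma lp_dominated_finite:
  assumes p: "p \<ge> 1" "p \<noteq> top" and x: "x \<in> lpX p" and y: "y \<in> lpX p" and k: "k \<ge> 0"
    and dom: "\<And>g. norm (z g) \<le> k * (norm (x g) + norm (y g))"
  shows "z \<in> lpX p \<and> lp_norm p z \<le> 4 * k * (lp_norm p x + lp_norm p y)"
proof -
  define q where "q = enn2real p"
  have q: "q \<ge> 1" using enn2real_ge_1[OF p] by (simp add: q_def)
  define a where "a = (\<lambda>g. norm (x g) powr q)"
  define b where "b = (\<lambda>g. norm (y g) powr q)"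
  define c where "c = (\<lambda>g. norm (z g) powr q)"
  have sa: "a summable_on UNIV" and sb: "b summable_on UNIV"
    using x y p by (simp_all add: lpX_def lp_mem_def q_def a_def b_def)
  have cb: "c g \<le> (2*k) powr q * (a g + b g)" for g
  proof -
    have "c g \<le> (k * (norm (x g) + norm (y g))) powr q"
      unfolding c_def using q dom by (intro powr_mono2) auto
    also have "\<dots> = k powr q * (norm (x g) + norm (y g)) powr q"
      using k by (simp add: powr_mult)
    also have "\<dots> \<le> k powr q * (2 powr q * (a g + b g))"
      unfolding a_def b_def using q by (intro mult_left_mono powr_add_le) auto
    finally show ?thesis using k by (simp add: powr_mult mult_ac)
  qed
  have sab: "(\<lambda>g. (2*k) powr q * (a g + b g)) summable_on UNIV"
    by (intro summable_on_cmult_right summable_on_add sa sb)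
  have sc: "c summable_on UNIV"
    by (rule summable_on_comparison_test[OF sab]) (use cb in \<open>auto simp: c_def\<close>)
  define Sa where "Sa = infsum a UNIV"
  define Sb where "Sb = infsum b UNIV"
  define Sc where "Sc = infsum c UNIV"
  have S0: "Sa \<ge> 0" "Sb \<ge> 0" "Sc \<ge> 0"
    unfolding Sa_def Sb_def Sc_def a_def b_def c_def by (auto intro: infsum_nonneg)
  have "Sc \<le> infsum (\<lambda>g. (2*k) powr q * (a g + b g)) UNIV"
    unfolding Sc_def by (rule infsum_mono[OF sc sab cb])
  also have "\<dots> = (2*k) powr q * (Sa + Sb)"
    by (simp add: infsum_cmult_right' infsum_add sa sb Sa_def Sb_def)
  finally have "Sc powr (1/q) \<le> ((2*k) powr q * (Sa + Sb)) powr (1/q)"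
    using q S0 by (intro powr_mono2) auto
  also have "\<dots> = 2 * k * (Sa + Sb) powr (1/q)"
    using q k S0 by (simp add: powr_mult powr_powr)
  also have "\<dots> \<le> 2 * k * (2 * (Sa powr (1/q) + Sb powr (1/q)))"
    using q k S0 by (intro mult_left_mono root_add_le) auto
  also have "\<dots> = 4 * k * (Sa powr (1/q) + Sb powr (1/q))"
    by algebra
  finally show ?thesis
    using sc p unfolding lpX_def lp_mem_def lp_norm_def q_def Sa_def Sb_def Sc_def a_def b_def c_def
    by simp
qed

lemma lp_dominated:
  assumes "p \<ge> 1" "x \<in> lpX p" "y \<in> lpX p" "k \<ge> 0"
    and "\<And>g. norm (z g) \<le> k * (norm (x g) + norm (y g))"
  shows "z \<in> lpX p \<and> lp_norm p z \<le> 4 * k * (lp_norm p x + lp_norm p y)"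
proof (cases "p = top")
  case True
  then have "z \<in> lpX p \<and> lp_norm p z \<le> k * (lp_norm p x + lp_norm p y)"
    using lp_dominated_top assms by blast
  moreover have "0 \<le> k * (lp_norm p x + lp_norm p y)"
    using assms by (intro mult_nonneg_nonneg add_nonneg_nonneg lp_norm_nonneg)
  ultimately show ?thesis by simp
qed (use lp_dominated_finite assms in blast)

lemma opnorm_nonneg:
  assumes "\<And>x. x \<in> lpX p \<Longrightarrow> lp_norm p x \<le> 1 \<Longrightarrow> T x \<in> lpX p \<and> lp_norm p (T x) \<le> M"
  shows "0 \<le> opnorm p T"
proof -
  define S where "S = {lp_norm p (T x) | x. x \<in> lpX p \<and> lp_norm p x \<le> 1}"
  have "lp_norm p (T (\<lambda>_. 0)) \<in> S"
    unfolding S_def by (auto simp: zero_in_lpX lp_norm_zero intro!: exI[of _ "\<lambda>_. 0"])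
  moreover have "bdd_above S"
    unfolding S_def bdd_above_def using assms by blast
  moreover have "0 \<le> lp_norm p (T (\<lambda>_. 0))"
    using assms[OF zero_in_lpX] by (simp add: lp_norm_zero lp_norm_nonneg)
  ultimately show ?thesis
    unfolding opnorm_def S_def[symmetric] by (meson cSup_upper order_trans)
qed

lemma lp_norm_le_opnorm:
  assumes "\<And>x. x \<in> lpX p \<Longrightarrow> lp_norm p x \<le> 1 \<Longrightarrow> T x \<in> lpX p \<and> lp_norm p (T x) \<le> M"
    and "x \<in> lpX p" "lp_norm p x \<le> 1"
  shows "lp_norm p (T x) \<le> opnorm p T"
  unfolding opnorm_def using assms by (intro cSup_upper) (auto simp: bdd_above_def)

lemma opnorm_zero: "opnorm p (\<lambda>x (_::'g). (0::'y::real_normed_vector)) = 0"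
proof -
  have "{lp_norm p ((\<lambda>x (_::'g). (0::'y)) x) | x. x \<in> lpX p \<and> lp_norm p x \<le> 1} = {0}"
    by (auto simp: zero_in_lpX lp_norm_zero intro!: exI[of _ "\<lambda>_. 0"])
  then show ?thesis unfolding opnorm_def by (metis cSup_singleton)
qed

lemma is_op_bounded:
  fixes A :: "('g \<Rightarrow> 'y::real_normed_vector) \<Rightarrow> ('g \<Rightarrow> 'y)"
  assumes "is_op p J A"
  obtains C where "C \<ge> 0" "\<And>x. x \<in> lpX p \<Longrightarrow> A x \<in> lpX p \<and> lp_norm p (A x) \<le> C * lp_norm p x"
proof -
  obtain C where C: "\<forall>x\<in>lpX p. lp_norm p (A x) \<le> C * lp_norm p x"
    using assms by (auto simp: is_op_def)
  show thesis
  proof (rule that[of "max C 0"])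
    fix x :: "'g \<Rightarrow> 'y" assume x: "x \<in> lpX p"
    have "A x \<in> lpX p"
      using assms x unfolding is_op_def by blast
    moreover have "lp_norm p (A x) \<le> C * lp_norm p x"
      using C x by blast
    moreover have "C * lp_norm p x \<le> max C 0 * lp_norm p x"
      using lp_norm_nonneg[OF x] by (intro mult_right_mono) auto
    ultimately show "A x \<in> lpX p \<and> lp_norm p (A x) \<le> max C 0 * lp_norm p x"
      by linarith
  qed simp
qed

lemma opdiff_bounded:
  assumes p: "p \<ge> 1" and D: "is_op p J D" and B: "is_op p J B"
  obtains M where "M \<ge> 0"
    "\<And>x. x \<in> lpX p \<Longrightarrow> opdiff D B x \<in> lpX p \<and> lp_norm p (opdiff D B x) \<le> M * lp_norm p x"
proof -
  obtain C1 where C1: "C1 \<ge> 0" "\<And>x. x \<in> lpX p \<Longrightarrow> D x \<in> lpX p \<and> lp_norm p (D x) \<le> C1 * lp_norm p x"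
    using is_op_bounded[OF D] by blast
  obtain C2 where C2: "C2 \<ge> 0" "\<And>x. x \<in> lpX p \<Longrightarrow> B x \<in> lpX p \<and> lp_norm p (B x) \<le> C2 * lp_norm p x"
    using is_op_bounded[OF B] by blast
  have "opdiff D B x \<in> lpX p \<and> lp_norm p (opdiff D B x) \<le> 4 * (C1 + C2) * lp_norm p x"
    if x: "x \<in> lpX p" for x
  proof -
    have "opdiff D B x \<in> lpX p \<and> lp_norm p (opdiff D B x) \<le> 4 * 1 * (lp_norm p (D x) + lp_norm p (B x))"
      using C1 C2 x by (intro lp_dominated[OF p]) (simp_all add: opdiff_def norm_triangle_ineq4)
    moreover have "4 * (lp_norm p (D x) + lp_norm p (B x)) \<le> 4 * (C1 + C2) * lp_norm p x"
      using C1 C2 x by (simp add: add_mono distrib_right)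
    ultimately show ?thesis by linarith
  qed
  then show thesis using that[of "4 * (C1 + C2)"] C1 C2 by simp
qed

lemma cscale_of_real [simp]: "cscale J (complex_of_real t) y = t *\<^sub>R y"
  by (simp add: cscale_def)

lemma is_op_eqI:
  assumes p: "p \<ge> 1" and B: "is_op p J B" and C: "is_op p J C"
    and unit_ball: "\<And>x. x \<in> lpX p \<Longrightarrow> lp_norm p x \<le> 1 \<Longrightarrow> B x = C x"
  shows "B = C"
proof
  fix x
  show "B x = C x"
  proof (cases "x \<in> lpX p")
    case False
    then show ?thesis using B C by (simp add: is_op_def)
  next
    case x: True
    define L where "L = lp_norm p x"
    have L: "L \<ge> 0" using lp_norm_nonneg[OF x] by (simp add: L_def)
    define s where "s = 1 / (4 * L + 1)"
    have s: "s > 0" using L by (simp add: s_def)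
    define y where "y = (\<lambda>g. cscale J (complex_of_real s) (x g))"
    have "y \<in> lpX p \<and> lp_norm p y \<le> 4 * (s/2) * (L + L)"
      unfolding L_def using s by (intro lp_dominated[OF p x x]) (simp_all add: y_def)
    moreover have "4 * (s/2) * (L + L) \<le> 1"
      using L by (simp add: s_def field_simps)
    ultimately have "B y = C y" using unit_ball by auto
    moreover have "B y = (\<lambda>g. cscale J (complex_of_real s) (B x g))"
      using B x unfolding is_op_def y_def by blast
    moreover have "C y = (\<lambda>g. cscale J (complex_of_real s) (C x g))"
      using C x unfolding is_op_def y_def by blast
    ultimately show ?thesis using s by (simp add: fun_eq_iff)
  qed
qed

subsection \<open>Coordinate projections\<close>

definition coord_proj :: "ennreal \<Rightarrow> 'g \<Rightarrow> ('g \<Rightarrow> 'y::real_normed_vector) \<Rightarrow> ('g \<Rightarrow> 'y)" where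
  "coord_proj p g0 = (\<lambda>x. if x \<in> lpX p then (\<lambda>g. if g = g0 then x g0 else 0) else (\<lambda>_. 0))"

lemma coord_proj_bounded:
  assumes "p \<ge> 1" "x \<in> lpX p"
  shows "coord_proj p g0 x \<in> lpX p" and "lp_norm p (coord_proj p g0 x) \<le> 4 * lp_norm p x"
  using lp_dominated[OF assms assms(2), of "1/2" "\<lambda>g. if g = g0 then x g0 else 0"] assms(2)
  by (auto simp: coord_proj_def)

lemma coord_proj_is_op:
  fixes J :: "'y::real_normed_vector \<Rightarrow> 'y" and g0 :: 'g
  assumes p: "p \<ge> 1" and J: "complex_structure J"
  shows "is_op p J (coord_proj p g0)"
  unfolding is_op_def
proof (intro conjI ballI allI impI)
  fix x :: "'g \<Rightarrow> 'y" assume "x \<in> lpX p"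
  then show "coord_proj p g0 x \<in> lpX p"
    by (rule coord_proj_bounded(1)[OF p])
next
  fix x y :: "'g \<Rightarrow> 'y" assume x: "x \<in> lpX p" and y: "y \<in> lpX p"
  have "(\<lambda>g. x g + y g) \<in> lpX p"
    using lp_dominated[OF p x y, of 1 "\<lambda>g. x g + y g"] by (simp add: norm_triangle_ineq)
  then show "coord_proj p g0 (\<lambda>g. x g + y g) = (\<lambda>g. coord_proj p g0 x g + coord_proj p g0 y g)"
    using x y by (auto simp: coord_proj_def)
next
  fix c and x :: "'g \<Rightarrow> 'y" assume x: "x \<in> lpX p"
  have "(\<lambda>g. cscale J c (x g)) \<in> lpX p"
    using lp_dominated[OF p x x, of "cmod c / 2" "\<lambda>g. cscale J c (x g)"] J
    by (simp add: complex_structure_def)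
  moreover have "cscale J c 0 = 0"
    using J by (simp add: cscale_def complex_structure_def linear_simps)
  ultimately show "coord_proj p g0 (\<lambda>g. cscale J c (x g)) = (\<lambda>g. cscale J c (coord_proj p g0 x g))"
    using x by (auto simp: coord_proj_def)
next
  show "\<exists>C. \<forall>x\<in>lpX p. lp_norm p (coord_proj p g0 x) \<le> C * lp_norm p x"
    by (intro exI[of _ 4] ballI) (simp add: coord_proj_bounded[OF p])
next
  fix x :: "'g \<Rightarrow> 'y" assume "x \<notin> lpX p"
  then show "coord_proj p g0 x = (\<lambda>_. 0)"
    by (simp add: coord_proj_def)
qed

lemma eventually_mem_Gs:
  assumes "admissible_Gs Gs" shows "eventually (\<lambda>n. g0 \<in> Gs n) sequentially"
proof -
  obtain m where "g0 \<in> Gs m" using assms unfolding admissible_Gs_def by blast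
  moreover obtain N where "\<forall>n\<ge>N. Gs m \<subseteq> Gs n" using assms unfolding admissible_Gs_def by blast
  ultimately show ?thesis unfolding eventually_sequentially by blast
qed

lemma coord_proj_Pcompact:
  assumes p: "p \<ge> 1" and J: "complex_structure J" and G: "admissible_Gs Gs"
  shows "Pcompact p J Gs (coord_proj p g0)"
  unfolding Pcompact_def
proof (intro conjI coord_proj_is_op[OF p J])
  have "eventually (\<lambda>n. coord_proj p g0 \<circ> IminusP p Gs n = (\<lambda>x _. 0)) sequentially"
    using eventually_mem_Gs[OF G, of g0]
    by eventually_elim (auto simp: coord_proj_def IminusP_def fun_eq_iff)
  then have "eventually (\<lambda>n. opnorm p (coord_proj p g0 \<circ> IminusP p Gs n) = 0) sequentially"
    by eventually_elim (erule ssubst, rule opnorm_zero)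
  then show "(\<lambda>n. opnorm p (coord_proj p g0 \<circ> IminusP p Gs n)) \<longlonglongrightarrow> 0"
    by (rule tendsto_eventually)
  have "eventually (\<lambda>n. IminusP p Gs n \<circ> coord_proj p g0 = (\<lambda>x _. 0)) sequentially"
    using eventually_mem_Gs[OF G, of g0]
    by eventually_elim (auto simp: coord_proj_def IminusP_def fun_eq_iff)
  then have "eventually (\<lambda>n. opnorm p (IminusP p Gs n \<circ> coord_proj p g0) = 0) sequentially"
    by eventually_elim (erule ssubst, rule opnorm_zero)
  then show "(\<lambda>n. opnorm p (IminusP p Gs n \<circ> coord_proj p g0)) \<longlonglongrightarrow> 0"
    by (rule tendsto_eventually)
qed

lemma norm_opdiff_le_coord_proj:
  assumes p: "p \<ge> 1" and D: "is_op p J D" and B: "is_op p J B"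
    and x: "x \<in> lpX p" "lp_norm p x \<le> 1"
  shows "norm (D x g0 - B x g0)
    \<le> opnorm p (coord_proj p g0 \<circ> opdiff D B) + opnorm p (opdiff D B \<circ> coord_proj p g0)"
proof -
  obtain M where M: "M \<ge> 0"
    "\<And>x. x \<in> lpX p \<Longrightarrow> opdiff D B x \<in> lpX p \<and> lp_norm p (opdiff D B x) \<le> M * lp_norm p x"
    using opdiff_bounded[OF p D B] by blast
  have M1: "M * lp_norm p y \<le> M" if "lp_norm p y \<le> 1" for y
    using M(1) that mult_left_mono[of "lp_norm p y" 1 M] by simp
  have left: "(coord_proj p g0 \<circ> opdiff D B) y \<in> lpX p
      \<and> lp_norm p ((coord_proj p g0 \<circ> opdiff D B) y) \<le> 4 * M"
    if "y \<in> lpX p" "lp_norm p y \<le> 1" for y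
  proof -
    have "opdiff D B y \<in> lpX p" "lp_norm p (opdiff D B y) \<le> M"
      using M(2)[OF that(1)] M1[OF that(2)] by auto
    then show ?thesis using coord_proj_bounded[OF p, of "opdiff D B y" g0] by simp
  qed
  have right: "(opdiff D B \<circ> coord_proj p g0) y \<in> lpX p
      \<and> lp_norm p ((opdiff D B \<circ> coord_proj p g0) y) \<le> M * 4"
    if "y \<in> lpX p" "lp_norm p y \<le> 1" for y
  proof -
    have Ky: "coord_proj p g0 y \<in> lpX p" "lp_norm p (coord_proj p g0 y) \<le> 4"
      using coord_proj_bounded[OF p that(1), of g0] that by auto
    then have "M * lp_norm p (coord_proj p g0 y) \<le> M * 4"
      using M(1) by (intro mult_left_mono)
    then show ?thesis using M(2)[OF Ky(1)] by auto
  qed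
  have "norm (D x g0 - B x g0) = norm ((coord_proj p g0 \<circ> opdiff D B) x g0)"
    using M x by (simp add: coord_proj_def opdiff_def)
  also have "\<dots> \<le> lp_norm p ((coord_proj p g0 \<circ> opdiff D B) x)"
    using left[OF x] by (intro norm_le_lp_norm[OF p]) simp
  also have "\<dots> \<le> opnorm p (coord_proj p g0 \<circ> opdiff D B)"
    using left x by (rule lp_norm_le_opnorm)
  finally show ?thesis
    using opnorm_nonneg[of p "opdiff D B \<circ> coord_proj p g0", OF right] by simp
qed

subsection \<open>\<open>\<P>\<close>-limits\<close>

lemma Plim_unique:
  assumes p: "p \<ge> 1" and J: "complex_structure J" and G: "admissible_Gs Gs"
    and An: "\<And>n. is_op p J (An n)" and PB: "Plim p J Gs An B" and PC: "Plim p J Gs An C"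
  shows "B = C"
proof -
  have B: "is_op p J B" and C: "is_op p J C"
    using PB PC by (simp_all add: Plim_def LXP_def)
  have pointwise: "B x g0 = C x g0" if x: "x \<in> lpX p" "lp_norm p x \<le> 1" for x g0
  proof -
    let ?K = "coord_proj p g0"
    define dist_to where "dist_to D n = opnorm p (?K \<circ> opdiff (An n) D) + opnorm p (opdiff (An n) D \<circ> ?K)"
      for D n
    have "dist_to B \<longlonglongrightarrow> 0" "dist_to C \<longlonglongrightarrow> 0"
      using PB PC coord_proj_Pcompact[OF p J G] unfolding Plim_def dist_to_def by blast+
    then have lim: "(\<lambda>n. dist_to B n + dist_to C n) \<longlonglongrightarrow> 0"
      using tendsto_add by fastforce
    have "norm (B x g0 - C x g0) \<le> dist_to B n + dist_to C n" for n
    proof -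
      have "norm (B x g0 - C x g0) \<le> norm (An n x g0 - B x g0) + norm (An n x g0 - C x g0)"
        by (metis norm_minus_commute norm_triangle_ineq4 diff_diff_eq2 diff_add_cancel)
      also have "\<dots> \<le> dist_to B n + dist_to C n"
        unfolding dist_to_def
        by (intro add_mono norm_opdiff_le_coord_proj[OF p An B x] norm_opdiff_le_coord_proj[OF p An C x])
      finally show ?thesis .
    qed
    then have "norm (B x g0 - C x g0) \<le> 0"
      by (intro LIMSEQ_le_const[OF lim]) auto
    then show ?thesis by simp
  qed
  show "B = C"
    by (rule is_op_eqI[OF p B C], rule ext, erule (1) pointwise)
qed

lemma Plim_subseq:
  assumes "Plim p J Gs An B" "strict_mono r"
  shows "Plim p J Gs (\<lambda>n. An (r n)) B"
  unfolding Plim_def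
proof (intro conjI allI impI)
  show "B \<in> LXP p J Gs" using assms(1) by (simp add: Plim_def)
  fix K assume "Pcompact p J Gs K"
  then have "(\<lambda>n. opnorm p (K \<circ> opdiff (An n) B) + opnorm p (opdiff (An n) B \<circ> K)) \<longlonglongrightarrow> 0"
    using assms(1) by (simp add: Plim_def)
  from LIMSEQ_subseq_LIMSEQ[OF this assms(2)]
  show "(\<lambda>n. opnorm p (K \<circ> opdiff (An (r n)) B) + opnorm p (opdiff (An (r n)) B \<circ> K)) \<longlonglongrightarrow> 0"
    by (simp add: o_def)
qed

lemma tends_to_inf_subseq:
  fixes g :: "nat \<Rightarrow> 'g"
  assumes "tends_to_inf g" "strict_mono r" shows "tends_to_inf (\<lambda>n. g (r n))"
  unfolding tends_to_inf_def
proof (intro allI impI)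
  fix F :: "'g set" assume "finite F"
  then obtain N where "\<forall>n\<ge>N. g n \<notin> F"
    using assms(1) by (auto simp: tends_to_inf_def eventually_sequentially)
  then show "eventually (\<lambda>n. g (r n) \<notin> F) sequentially"
    using seq_suble[OF assms(2)] le_trans unfolding eventually_sequentially by blast
qed

subsection \<open>Limit operators of a family over a dynamical system\<close>

lemma op_family_shift:
  "op_family p J Gs \<alpha> A \<Longrightarrow> A (\<alpha> g \<omega>) = Vop p g \<circ> A \<omega> \<circ> Vop p (- g)"
  by (simp add: op_family_def)

lemma op_family_Plim:
  "op_family p J Gs \<alpha> A \<Longrightarrow> \<omega>s \<longlonglongrightarrow> \<omega> \<Longrightarrow> Plim p J Gs (\<lambda>n. A (\<omega>s n)) (A \<omega>)"
  by (simp add: op_family_def)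

lemma op_family_is_op: "op_family p J Gs \<alpha> A \<Longrightarrow> is_op p J (A \<omega>)"
  by (simp add: op_family_def LXP_def)

lemma limit_op_of_limit_point:
  assumes A: "op_family p J Gs \<alpha> A"
  shows "A ` limit_set \<alpha> \<omega> \<subseteq> op_spectrum p J Gs (A \<omega>)"
proof
  fix C assume "C \<in> A ` limit_set \<alpha> \<omega>"
  then obtain \<nu> g where g: "tends_to_inf g" "(\<lambda>n. \<alpha> (g n) \<omega>) \<longlonglongrightarrow> \<nu>" and C: "C = A \<nu>"
    by (auto simp: limit_set_def)
  have "Plim p J Gs (\<lambda>n. A (\<alpha> (g n) \<omega>)) C"
    unfolding C by (rule op_family_Plim[OF A g(2)])
  then have "Plim p J Gs (\<lambda>n. Vop p (g n) \<circ> A \<omega> \<circ> Vop p (- g n)) C"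
    by (simp add: op_family_shift[OF A])
  then show "C \<in> op_spectrum p J Gs (A \<omega>)"
    using g(1) by (auto simp: op_spectrum_def)
qed

lemma limit_point_of_limit_op:
  fixes \<alpha> :: "'g::group_add \<Rightarrow> 'w::metric_space \<Rightarrow> 'w"
  assumes p: "p \<ge> 1" and J: "complex_structure J" and G: "admissible_Gs Gs"
    and \<alpha>: "dyn_system \<alpha>" and A: "op_family p J Gs \<alpha> A"
  shows "op_spectrum p J Gs (A \<omega>) \<subseteq> A ` limit_set \<alpha> \<omega>"
proof
  fix C assume "C \<in> op_spectrum p J Gs (A \<omega>)"
  then obtain g where g: "tends_to_inf g"
    and PC: "Plim p J Gs (\<lambda>n. Vop p (g n) \<circ> A \<omega> \<circ> Vop p (- g n)) C"
    by (auto simp: op_spectrum_def)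
  have "seq_compact (UNIV :: 'w set)"
    using \<alpha> by (simp add: dyn_system_def compact_imp_seq_compact)
  then obtain \<nu> r where r: "strict_mono r" and conv: "(\<lambda>n. \<alpha> (g (r n)) \<omega>) \<longlonglongrightarrow> \<nu>"
    by (rule seq_compactE[where f = "\<lambda>n. \<alpha> (g n) \<omega>"]) (auto simp: o_def)
  have \<nu>: "\<nu> \<in> limit_set \<alpha> \<omega>"
    using tends_to_inf_subseq[OF g r] conv by (auto simp: limit_set_def)
  have "Plim p J Gs (\<lambda>n. A (\<alpha> (g (r n)) \<omega>)) C"
    using Plim_subseq[OF PC r] by (simp add: op_family_shift[OF A])
  moreover have "Plim p J Gs (\<lambda>n. A (\<alpha> (g (r n)) \<omega>)) (A \<nu>)"
    by (rule op_family_Plim[OF A conv])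
  ultimately have "C = A \<nu>"
    by (rule Plim_unique[OF p J G op_family_is_op[OF A]])
  with \<nu> show "C \<in> A ` limit_set \<alpha> \<omega>" by simp
qed

theorem proposition4p2:
  fixes p :: ennreal
    and J :: "'y::banach \<Rightarrow> 'y"
    and Gs :: "nat \<Rightarrow> 'g::{group_add, countable} set"
    and \<alpha> :: "'g \<Rightarrow> 'w::metric_space \<Rightarrow> 'w"
    and A :: "'w \<Rightarrow> ('g \<Rightarrow> 'y) \<Rightarrow> ('g \<Rightarrow> 'y)"
    and \<omega> :: 'w
  assumes "p \<ge> 1"
    and "complex_structure J"
    and "admissible_Gs Gs"
    and "dyn_system \<alpha>"
    and "op_family p J Gs \<alpha> A"
  shows "op_spectrum p J Gs (A \<omega>) = A ` limit_set \<alpha> \<omega>"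
  using limit_point_of_limit_op[OF assms] limit_op_of_limit_point[OF assms(5)] by (rule equalityI)

end
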